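(* Let $G$ be a finite simple graph on $n$ vertices with at least one edge, and let $\lambda_{2}$ and $\lambda_{n}$ be the second smallest and the largest Laplacian eigenvalues of $G$, respectively. Then \[ \mathrm{tw}(G) \ge \frac{2n \lambda_{2}}{3\lambda_{n} - \lambda_{2}} - 1, \] where $\mathrm{tw}(G)$ is the treewidth of $G$.
   Context: For a graph $G=(V,E)$ with $n$ vertices, the Laplacian matrix $L \in \mathbb{Z}^{V\times V}$ is given by $L(u,u)=\deg(u)$, $L(u,v)=-1$ if $\{u,v\}\in E$, and $L(u,v)=0$ otherwise (for $u \ne v$). The Laplacian eigenvalues are the eigenvalues of $L$, listed in non-decreasing order as $\lambda_1 \le \lambda_2 \le \dots \le \lambda_n$. Treewidth is the standard notion: the minimum, over all tree decompositions of $G$, of the maximum bag size minus one. *)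

theory Defs
  imports "Jordan_Normal_Form.Char_Poly" "HOL-Library.Multiset"
begin

definition simple_graph :: "nat \<Rightarrow> (nat \<Rightarrow> nat \<Rightarrow> bool) \<Rightarrow> bool" where
  "simple_graph n E \<longleftrightarrow> (\<forall>i j. E i j \<longrightarrow> i < n \<and> j < n \<and> i \<noteq> j \<and> E j i)"

definition degree_in :: "nat \<Rightarrow> (nat \<Rightarrow> nat \<Rightarrow> bool) \<Rightarrow> nat \<Rightarrow> nat" where
  "degree_in n E u = card {v. v < n \<and> E u v}"

definition laplacian :: "nat \<Rightarrow> (nat \<Rightarrow> nat \<Rightarrow> bool) \<Rightarrow> real mat" where
  "laplacian n E = mat n n (\<lambda>(u, v). if u = v then real (degree_in n E u)
                                     else if E u v then -1 else 0)"

(* Laplacian eigenvalues with multiplicity (roots of the characteristic polynomial),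
   listed in non-decreasing order: lambda_1 = ! 0, ..., lambda_n = ! (n-1). *)
definition laplacian_eigenvalues :: "nat \<Rightarrow> (nat \<Rightarrow> nat \<Rightarrow> bool) \<Rightarrow> real list" where
  "laplacian_eigenvalues n E = sorted_list_of_multiset (proots (char_poly (laplacian n E)))"

definition is_tree :: "nat \<Rightarrow> (nat \<Rightarrow> nat \<Rightarrow> bool) \<Rightarrow> bool" where
  "is_tree m T \<longleftrightarrow> m \<ge> 1 \<and> simple_graph m T
     \<and> (\<forall>x y. x < m \<longrightarrow> y < m \<longrightarrow> T\<^sup>*\<^sup>* x y)
     \<and> card {(i, j). T i j \<and> i < j} = m - 1"

definition connected_in :: "(nat \<Rightarrow> nat \<Rightarrow> bool) \<Rightarrow> nat set \<Rightarrow> bool" where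
  "connected_in T S \<longleftrightarrow> (\<forall>x\<in>S. \<forall>y\<in>S. (\<lambda>a b. T a b \<and> a \<in> S \<and> b \<in> S)\<^sup>*\<^sup>* x y)"

definition tree_decomposition ::
  "nat \<Rightarrow> (nat \<Rightarrow> nat \<Rightarrow> bool) \<Rightarrow> nat \<Rightarrow> (nat \<Rightarrow> nat \<Rightarrow> bool) \<Rightarrow> (nat \<Rightarrow> nat set) \<Rightarrow> bool" where
  "tree_decomposition n E m T B \<longleftrightarrow> is_tree m T
     \<and> (\<forall>t<m. B t \<subseteq> {0..<n})
     \<and> (\<forall>v<n. \<exists>t<m. v \<in> B t)
     \<and> (\<forall>u v. E u v \<longrightarrow> (\<exists>t<m. u \<in> B t \<and> v \<in> B t))
     \<and> (\<forall>v<n. connected_in T {t. t < m \<and> v \<in> B t})"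

definition treewidth :: "nat \<Rightarrow> (nat \<Rightarrow> nat \<Rightarrow> bool) \<Rightarrow> nat" where
  "treewidth n E = (LEAST k. \<exists>m T B. tree_decomposition n E m T B \<and> (\<forall>t<m. card (B t) \<le> k + 1))"

end

theory Submission
  imports Defs "Jordan_Normal_Form.Schur_Decomposition"
begin

(*
  A tree decomposition whose bags have at most k + 1 vertices contains a bag S
  whose removal splits the remaining vertices into two parts A and B, joined by
  no edge, each with at least (n - k - 1)/4 vertices.  As no edge joins A and B,
  the vectors 1_A - 1_B and 1_A + 1_B have the same Laplacian quadratic form.
  After centring, the first is orthogonal to the all-ones kernel vector, so
  that form is at least lambda_2 times its squared norm, while for the second
  it is at most lambda_n times its squared norm.  Evaluating the norms gives
  4 lambda_2 |A| |B| <= (lambda_n - lambda_2) |S| (|A| + |B|), and the balance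
  of A and B turns this into the claimed lower bound on k.
*)

section \<open>Real symmetric matrices are orthogonally diagonalizable\<close>

lemma conjugate_mult_mat_vec_of_real:
  fixes A :: "real mat" and v :: "complex vec"
  assumes "A \<in> carrier_mat n n" "v \<in> carrier_vec n"
  shows "conjugate (map_mat complex_of_real A *\<^sub>v v) = map_mat complex_of_real A *\<^sub>v conjugate v"
  using assms by (intro eq_vecI) (auto simp: scalar_prod_def sum_conjugate conjugate_dist_mul)

lemma symmetric_real_mat_has_eigenvalue:
  fixes A :: "real mat"
  assumes A: "A \<in> carrier_mat n n" and "n > 0" and sym: "transpose_mat A = A"
  shows "\<exists>e. eigenvalue A e"
proof -
  let ?Ac = "map_mat complex_of_real A"
  have Ac: "?Ac \<in> carrier_mat n n" using A by simp
  have "degree (char_poly ?Ac) = n" using degree_monic_char_poly[OF Ac] by simp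
  then obtain z where "poly (char_poly ?Ac) z = 0"
    using fundamental_theorem_of_algebra_alt \<open>n > 0\<close> by (metis degree_pCons_0 neq0_conv)
  then obtain v where "eigenvector ?Ac v z"
    by (auto simp: eigenvalue_root_char_poly[OF Ac, symmetric] eigenvalue_def)
  then have v: "v \<in> carrier_vec n" "v \<noteq> 0\<^sub>v n" and Av: "?Ac *\<^sub>v v = z \<cdot>\<^sub>v v"
    using Ac by (auto simp: eigenvector_def)
  have vv: "conjugate v \<bullet> v \<noteq> 0"
    using conjugate_square_greater_0_vec[OF v(1)] v(2) conjugate_vec_sprod_comm[OF v(1) v(1)] by force
  have "z * (conjugate v \<bullet> v) = conjugate v \<bullet> (?Ac *\<^sub>v v)"
    using v(1) by (simp add: Av)
  also have "\<dots> = (transpose_mat ?Ac *\<^sub>v conjugate v) \<bullet> v"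
    using transpose_vec_mult_scalar[OF Ac v(1)] v(1) by simp
  also have "transpose_mat ?Ac = ?Ac"
    using sym by (metis map_mat_transpose)
  also have "?Ac *\<^sub>v conjugate v = conjugate (z \<cdot>\<^sub>v v)"
    using conjugate_mult_mat_vec_of_real[OF A v(1)] Av by simp
  also have "conjugate (z \<cdot>\<^sub>v v) \<bullet> v = cnj z * (conjugate v \<bullet> v)"
    using v(1) by (simp add: conjugate_smult_vec)
  finally have "z = cnj z" using vv by simp
  then have "z = complex_of_real (Re z)"
    by (metis Reals_cnj_iff of_real_Re)
  then have "eigenvalue ?Ac (complex_of_real (Re z))"
    using \<open>eigenvector ?Ac v z\<close> by (auto simp: eigenvalue_def)
  then have "poly (char_poly A) (Re z) = 0"
    by (simp add: eigenvalue_root_char_poly[OF Ac] of_real_hom.char_poly_hom[OF A])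
  then show ?thesis using eigenvalue_root_char_poly[OF A] by blast
qed

lemma orthogonal_basis_with_head:
  fixes v :: "real vec"
  assumes v: "v \<in> carrier_vec n" "v \<noteq> 0\<^sub>v n"
  shows "\<exists>ws. set ws \<subseteq> carrier_vec n \<and> length ws = n \<and> ws ! 0 = v
           \<and> (\<forall>i<n. \<forall>j<n. ws ! i \<bullet> ws ! j = 0 \<longleftrightarrow> i \<noteq> j)"
proof -
  have "n > 0" using v by (cases n) auto
  interpret cof_vec_space n "TYPE(real)" .
  define b where "b = basis_completion v"
  from basis_completion[OF v, folded b_def]
  have b: "set b \<subseteq> carrier_vec n" "distinct b" "\<not> lin_dep (set b)" "length b = n" "hd b = v"
    by auto
  then obtain bs where b_Cons: "b = v # bs" using \<open>n > 0\<close> by (cases b) auto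
  define ws where "ws = gram_schmidt n b"
  from gram_schmidt_result[OF b(1-3) ws_def]
  have ws: "set ws \<subseteq> carrier_vec n" "corthogonal ws" "length ws = n" using b(4) by auto
  moreover have "ws ! 0 = v"
    using gram_schmidt_hd[OF v(1)] ws(3) \<open>n > 0\<close> unfolding ws_def b_Cons
    by (metis hd_conv_nth list.size(3) not_less_zero)
  ultimately show ?thesis
    using corthogonalD[OF ws(2)] by (intro exI[of _ ws]) simp
qed

lemma orthonormal_mat_with_first_col:
  fixes v :: "real vec"
  assumes "v \<in> carrier_vec n" "v \<noteq> 0\<^sub>v n"
  shows "\<exists>W \<in> carrier_mat n n. transpose_mat W * W = 1\<^sub>m n \<and> col W 0 = (1 / sqrt (v \<bullet> v)) \<cdot>\<^sub>v v"
proof -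
  obtain ws where ws: "set ws \<subseteq> carrier_vec n" "length ws = n" "ws ! 0 = v"
    and orth: "\<And>i j. i < n \<Longrightarrow> j < n \<Longrightarrow> ws ! i \<bullet> ws ! j = 0 \<longleftrightarrow> i \<noteq> j"
    using orthogonal_basis_with_head[OF assms] by blast
  have ws_carrier: "ws ! i \<in> carrier_vec n" if "i < n" for i
    using ws that by auto
  have ws_pos: "ws ! i \<bullet> ws ! i > 0" if "i < n" for i
    using orth[OF that that] conjugate_square_ge_0_vec[of "ws ! i", simplified] by linarith
  define us where "us = map (\<lambda>w. (1 / sqrt (w \<bullet> w)) \<cdot>\<^sub>v w) ws"
  have us: "length us = n" "\<And>i. i < n \<Longrightarrow> us ! i \<in> carrier_vec n"
    using ws ws_carrier by (auto simp: us_def)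
  have "us ! i \<bullet> us ! j = (if i = j then 1 else 0)" if "i < n" "j < n" for i j
  proof -
    have "us ! i \<bullet> us ! j = 1 / sqrt (ws ! i \<bullet> ws ! i) * (1 / sqrt (ws ! j \<bullet> ws ! j)) * (ws ! i \<bullet> ws ! j)"
      using that ws(2) ws_carrier[OF that(1)] ws_carrier[OF that(2)] by (simp add: us_def)
    then show ?thesis
      using orth[OF that] ws_pos[OF that(1)] by (auto simp: real_sqrt_mult[symmetric])
  qed
  moreover define W where "W = mat_of_cols n us"
  ultimately have "W \<in> carrier_mat n n" "transpose_mat W * W = 1\<^sub>m n"
    using us by (auto simp: W_def intro!: eq_matI)
  moreover have "col W 0 = (1 / sqrt (v \<bullet> v)) \<cdot>\<^sub>v v"
    using us ws assms by (cases n) (auto simp: W_def us_def)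
  ultimately show ?thesis by blast
qed

definition diag_of_list :: "'a::zero list \<Rightarrow> 'a mat" where
  "diag_of_list ds = mat (length ds) (length ds) (\<lambda>(i, j). if i = j then ds ! i else 0)"

lemma diag_of_list_carrier: "diag_of_list ds \<in> carrier_mat (length ds) (length ds)"
  by (simp add: diag_of_list_def)

lemma diag_of_list_mult_vec:
  fixes ds :: "'a::comm_semiring_0 list"
  assumes "y \<in> carrier_vec (length ds)"
  shows "diag_of_list ds *\<^sub>v y = vec (length ds) (\<lambda>i. ds ! i * y $ i)"
proof (rule eq_vecI)
  fix i assume i: "i < dim_vec (vec (length ds) (\<lambda>i. ds ! i * y $ i))"
  then have "(diag_of_list ds *\<^sub>v y) $ i = (\<Sum>j = 0..<length ds. (if i = j then ds ! i else 0) * y $ j)"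
    using assms by (simp add: diag_of_list_def scalar_prod_def)
  also have "\<dots> = (\<Sum>j = 0..<length ds. if i = j then ds ! i * y $ j else 0)"
    by (rule sum.cong) auto
  finally show "(diag_of_list ds *\<^sub>v y) $ i = vec (length ds) (\<lambda>i. ds ! i * y $ i) $ i"
    using i by simp
qed (simp add: diag_of_list_def)

lemma mult_four_block_diag_mat:
  fixes A1 A2 :: "'a::semiring_0 mat"
  assumes "A1 \<in> carrier_mat k k" "A2 \<in> carrier_mat k k" "D1 \<in> carrier_mat n n" "D2 \<in> carrier_mat n n"
  shows "four_block_mat A1 (0\<^sub>m k n) (0\<^sub>m n k) D1 * four_block_mat A2 (0\<^sub>m k n) (0\<^sub>m n k) D2
       = four_block_mat (A1 * A2) (0\<^sub>m k n) (0\<^sub>m n k) (D1 * D2)"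
  using mult_four_block_mat[OF assms(1) zero_carrier_mat zero_carrier_mat assms(3)
      assms(2) zero_carrier_mat zero_carrier_mat assms(4)] assms
  by simp

lemma transpose_four_block_diag_mat:
  assumes "A \<in> carrier_mat k k" "D \<in> carrier_mat n n"
  shows "transpose_mat (four_block_mat A (0\<^sub>m k n) (0\<^sub>m n k) D)
       = four_block_mat (transpose_mat A) (0\<^sub>m k n) (0\<^sub>m n k) (transpose_mat D)"
  using assms by (subst transpose_four_block_mat) auto

lemma symmetric_mat_first_col_block:
  assumes A: "A \<in> carrier_mat (Suc n) (Suc n)" and sym: "transpose_mat A = A"
    and col0: "\<And>i. i < Suc n \<Longrightarrow> A $$ (i, 0) = (if i = 0 then e else 0)"
  shows "A = four_block_mat (mat 1 1 (\<lambda>_. e)) (0\<^sub>m 1 n) (0\<^sub>m n 1) (mat n n (\<lambda>(i, j). A $$ (Suc i, Suc j)))"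
    (is "A = ?B")
proof (rule eq_matI)
  fix i j assume "i < dim_row ?B" "j < dim_col ?B"
  then have ij: "i < Suc n" "j < Suc n" by auto
  have "A $$ (0, j) = A $$ (j, 0)"
    using ij A by (metis sym carrier_matD index_transpose_mat(1) zero_less_Suc)
  then have "A $$ (0, j) = (if j = 0 then e else 0)"
    using col0[OF ij(2)] by simp
  then show "A $$ (i, j) = ?B $$ (i, j)"
    using col0 ij by (cases i; cases j) auto
qed (use A in auto)

lemma orthogonal_conj_first_col:
  fixes A W :: "real mat"
  assumes A: "A \<in> carrier_mat n n" and W: "W \<in> carrier_mat n n" "transpose_mat W * W = 1\<^sub>m n"
    and eig: "A *\<^sub>v col W 0 = e \<cdot>\<^sub>v col W 0" and i: "i < n"
  shows "(transpose_mat W * (A * W)) $$ (i, 0) = (if i = 0 then e else 0)"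
proof -
  have "n > 0" using i by simp
  have "(transpose_mat W * (A * W)) $$ (i, 0) = row (transpose_mat W) i \<bullet> col (A * W) 0"
    by (rule index_mult_mat(1)) (use A W i in auto)
  also have "row (transpose_mat W) i = col W i" using W i by simp
  also have "col (A * W) 0 = A *\<^sub>v col W 0" by (rule col_mult2[OF A W(1) \<open>n > 0\<close>])
  also have "\<dots> = e \<cdot>\<^sub>v col W 0" by (rule eig)
  also have "col W i \<bullet> (e \<cdot>\<^sub>v col W 0) = e * (col W i \<bullet> col W 0)"
    using W i \<open>n > 0\<close> by (simp add: scalar_prod_smult_distrib[of _ n])
  also have "col W i \<bullet> col W 0 = (if i = 0 then 1 else 0)"
  proof -
    have "col W i \<bullet> col W 0 = (transpose_mat W * W) $$ (i, 0)"
      using W(1) i \<open>n > 0\<close> by simp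
    also have "\<dots> = (if i = 0 then 1 else 0)"
      unfolding W(2) using i \<open>n > 0\<close> by simp
    finally show ?thesis .
  qed
  finally show ?thesis by simp
qed

lemma symmetric_mat_deflation:
  fixes A W :: "real mat"
  assumes A: "A \<in> carrier_mat (Suc n) (Suc n)" and sym: "transpose_mat A = A"
    and W: "W \<in> carrier_mat (Suc n) (Suc n)" "transpose_mat W * W = 1\<^sub>m (Suc n)"
    and eig: "A *\<^sub>v col W 0 = e \<cdot>\<^sub>v col W 0"
  shows "\<exists>A3. A3 \<in> carrier_mat n n \<and> transpose_mat A3 = A3
    \<and> A = W * four_block_mat (mat 1 1 (\<lambda>_. e)) (0\<^sub>m 1 n) (0\<^sub>m n 1) A3 * transpose_mat W"
proof -
  define A' where "A' = transpose_mat W * (A * W)"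
  define A3 where "A3 = mat n n (\<lambda>(i, j). A' $$ (Suc i, Suc j))"
  have A': "A' \<in> carrier_mat (Suc n) (Suc n)" using A W by (simp add: A'_def)
  have "transpose_mat A' = transpose_mat (A * W) * W"
    using transpose_mult[of "transpose_mat W" "Suc n" "Suc n" "A * W" "Suc n"] A W by (simp add: A'_def)
  then have A'_sym: "transpose_mat A' = A'"
    using A W sym by (simp add: A'_def transpose_mult[OF A W(1)])
  have "A' = four_block_mat (mat 1 1 (\<lambda>_. e)) (0\<^sub>m 1 n) (0\<^sub>m n 1) A3"
    unfolding A3_def using orthogonal_conj_first_col[OF A W eig]
    by (intro symmetric_mat_first_col_block[OF A' A'_sym]) (simp add: A'_def)
  moreover have "transpose_mat A3 = A3"
    using A' by (intro eq_matI) (auto simp: A3_def, metis A'_sym carrier_matD index_transpose_mat(1) Suc_mono)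
  moreover have "W * A' * transpose_mat W = (W * transpose_mat W) * A * (W * transpose_mat W)"
    using A W by (simp add: A'_def assoc_mult_mat[of _ "Suc n" "Suc n" _ "Suc n" _ "Suc n"])
  then have "A = W * A' * transpose_mat W"
    using A mat_mult_left_right_inverse[OF _ W(1) W(2)] W(1) by simp
  moreover have "A3 \<in> carrier_mat n n" by (simp add: A3_def)
  ultimately show ?thesis by blast
qed

lemma orthogonal_conj_extend_diag:
  fixes W U3 :: "real mat"
  assumes W: "W \<in> carrier_mat (Suc n) (Suc n)" "W * transpose_mat W = 1\<^sub>m (Suc n)"
    and U3: "U3 \<in> carrier_mat n n" "U3 * transpose_mat U3 = 1\<^sub>m n" and ds: "length ds = n"
  defines "U \<equiv> W * four_block_mat (1\<^sub>m 1) (0\<^sub>m 1 n) (0\<^sub>m n 1) U3"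
  shows "U \<in> carrier_mat (Suc n) (Suc n)" "U * transpose_mat U = 1\<^sub>m (Suc n)"
    "W * four_block_mat (mat 1 1 (\<lambda>_. e)) (0\<^sub>m 1 n) (0\<^sub>m n 1) (U3 * diag_of_list ds * transpose_mat U3)
       * transpose_mat W = U * diag_of_list (e # ds) * transpose_mat U"
proof -
  define V where "V = four_block_mat (1\<^sub>m 1) (0\<^sub>m 1 n) (0\<^sub>m n 1) U3"
  have V: "V \<in> carrier_mat (Suc n) (Suc n)"
    using four_block_carrier_mat[OF one_carrier_mat[of 1] U3(1)] by (simp add: V_def)
  have Vt: "transpose_mat V = four_block_mat (1\<^sub>m 1) (0\<^sub>m 1 n) (0\<^sub>m n 1) (transpose_mat U3)"
    using U3(1) by (simp add: V_def transpose_four_block_diag_mat)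
  have Ut: "transpose_mat U = transpose_mat V * transpose_mat W"
    unfolding U_def V_def[symmetric] by (rule transpose_mult[OF W(1) V])
  show "U \<in> carrier_mat (Suc n) (Suc n)" unfolding U_def V_def[symmetric] using W V by simp
  have "V * transpose_mat V = 1\<^sub>m (Suc n)"
    unfolding Vt using U3 by (simp add: V_def mult_four_block_diag_mat)
  then have "U * transpose_mat U = W * transpose_mat W"
    unfolding Ut unfolding U_def V_def[symmetric] using W V
    by (simp flip: assoc_mult_mat[of _ "Suc n" "Suc n" _ "Suc n" _ "Suc n"])
  then show "U * transpose_mat U = 1\<^sub>m (Suc n)" using W(2) by simp
  have "diag_of_list (e # ds) = four_block_mat (mat 1 1 (\<lambda>_. e)) (0\<^sub>m 1 n) (0\<^sub>m n 1) (diag_of_list ds)"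
    using ds by (intro eq_matI) (auto simp: diag_of_list_def)
  then have "V * diag_of_list (e # ds) * transpose_mat V
      = four_block_mat (mat 1 1 (\<lambda>_. e)) (0\<^sub>m 1 n) (0\<^sub>m n 1) (U3 * diag_of_list ds * transpose_mat U3)"
    unfolding Vt using U3 ds diag_of_list_carrier[of ds] by (simp add: V_def mult_four_block_diag_mat)
  moreover have "U * diag_of_list (e # ds) * transpose_mat U
      = W * (V * diag_of_list (e # ds) * transpose_mat V) * transpose_mat W"
    unfolding Ut unfolding U_def V_def[symmetric] using W V ds diag_of_list_carrier[of "e # ds"]
    by (simp add: assoc_mult_mat[of _ "Suc n" "Suc n" _ "Suc n" _ "Suc n"])
  ultimately show "W * four_block_mat (mat 1 1 (\<lambda>_. e)) (0\<^sub>m 1 n) (0\<^sub>m n 1) (U3 * diag_of_list ds * transpose_mat U3)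
       * transpose_mat W = U * diag_of_list (e # ds) * transpose_mat U"
    by simp
qed

theorem symmetric_mat_orthogonal_diagonalization:
  fixes A :: "real mat"
  assumes "A \<in> carrier_mat n n" and "transpose_mat A = A"
  shows "\<exists>U ds. U \<in> carrier_mat n n \<and> length ds = n \<and> U * transpose_mat U = 1\<^sub>m n
           \<and> A = U * diag_of_list ds * transpose_mat U"
  using assms
proof (induction n arbitrary: A)
  case 0
  then show ?case
    by (intro exI[of _ "1\<^sub>m 0"] exI[of _ "[]"]) (auto simp: diag_of_list_def)
next
  case (Suc n)
  obtain e v where "eigenvector A v e"
    using symmetric_real_mat_has_eigenvalue[OF Suc.prems(1) _ Suc.prems(2)] by (auto simp: eigenvalue_def)
  then have v: "v \<in> carrier_vec (Suc n)" "v \<noteq> 0\<^sub>v (Suc n)" and Av: "A *\<^sub>v v = e \<cdot>\<^sub>v v"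
    using Suc.prems(1) by (auto simp: eigenvector_def)
  obtain W where W: "W \<in> carrier_mat (Suc n) (Suc n)" "transpose_mat W * W = 1\<^sub>m (Suc n)"
    and col_W0: "col W 0 = (1 / sqrt (v \<bullet> v)) \<cdot>\<^sub>v v"
    using orthonormal_mat_with_first_col[OF v(1,2)] by blast
  have "A *\<^sub>v col W 0 = e \<cdot>\<^sub>v col W 0"
    unfolding col_W0 mult_mat_vec[OF Suc.prems(1) v(1)] Av by (simp add: smult_smult_assoc mult.commute)
  then obtain A3 where A3: "A3 \<in> carrier_mat n n" "transpose_mat A3 = A3"
    and A_eq: "A = W * four_block_mat (mat 1 1 (\<lambda>_. e)) (0\<^sub>m 1 n) (0\<^sub>m n 1) A3 * transpose_mat W"
    using symmetric_mat_deflation[OF Suc.prems W] by blast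
  have WWt: "W * transpose_mat W = 1\<^sub>m (Suc n)"
    using mat_mult_left_right_inverse[OF _ W(1) W(2)] W(1) by simp
  obtain U3 ds where U3: "U3 \<in> carrier_mat n n" "length ds = n" "U3 * transpose_mat U3 = 1\<^sub>m n"
    and "A3 = U3 * diag_of_list ds * transpose_mat U3"
    using Suc.IH[OF A3] by blast
  with orthogonal_conj_extend_diag[OF W(1) WWt U3(1,3,2)] A_eq show ?case
    by (intro exI[of _ "W * four_block_mat (1\<^sub>m 1) (0\<^sub>m 1 n) (0\<^sub>m n 1) U3"] exI[of _ "e # ds"]) auto
qed

section \<open>Extreme eigenvalues and quadratic forms\<close>

definition sorted_eigenvalues :: "real mat \<Rightarrow> real list" where
  "sorted_eigenvalues A = sorted_list_of_multiset (proots (char_poly A))"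

lemma proots_prod_linear_factors: "proots (\<Prod>a\<leftarrow>ds. [:- a, 1:]) = mset (ds :: real list)"
proof (induction ds)
  case (Cons a ds)
  have "(\<Prod>a\<leftarrow>ds. [:- a, 1:]) \<noteq> (0 :: real poly)"
    unfolding prod_list_zero_iff by auto
  then have "proots ([:- a, 1:] * (\<Prod>a\<leftarrow>ds. [:- a, 1:])) = proots [:- a, 1:] + proots (\<Prod>a\<leftarrow>ds. [:- a, 1:])"
    by (intro proots_mult) auto
  then show ?case using Cons by simp
qed simp

lemma sorted_eigenvalues_diagonalization:
  fixes A :: "real mat"
  assumes A: "A \<in> carrier_mat n n" and U: "U \<in> carrier_mat n n" "U * transpose_mat U = 1\<^sub>m n"
    and ds: "length ds = n" and A_eq: "A = U * diag_of_list ds * transpose_mat U"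
  shows "sorted_eigenvalues A = sort ds"
proof -
  have D: "diag_of_list ds \<in> carrier_mat n n" using diag_of_list_carrier[of ds] ds by simp
  have "transpose_mat U * U = 1\<^sub>m n"
    using mat_mult_left_right_inverse[OF U(1) _ U(2)] U(1) by simp
  then have "similar_mat_wit A (diag_of_list ds) U (transpose_mat U)"
    using A U D A_eq by (intro similar_mat_witI) auto
  then have "similar_mat A (diag_of_list ds)"
    unfolding similar_mat_def by blast
  then have "char_poly A = char_poly (diag_of_list ds)" by (rule char_poly_similar)
  also have "\<dots> = (\<Prod>a\<leftarrow>diag_mat (diag_of_list ds). [:- a, 1:])"
    by (rule char_poly_upper_triangular[OF D]) (auto simp: upper_triangular_def diag_of_list_def)
  also have "diag_mat (diag_of_list ds) = ds"
    unfolding diag_mat_def diag_of_list_def by (rule nth_equalityI) auto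
  finally show ?thesis
    by (simp add: sorted_eigenvalues_def proots_prod_linear_factors)
qed

lemma sorted_eigenvalues_symmetric:
  fixes A :: "real mat"
  assumes "A \<in> carrier_mat n n" "transpose_mat A = A"
  shows "sorted (sorted_eigenvalues A)" "length (sorted_eigenvalues A) = n"
proof -
  obtain U ds where "U \<in> carrier_mat n n" "U * transpose_mat U = 1\<^sub>m n" "length ds = n"
    "A = U * diag_of_list ds * transpose_mat U"
    using symmetric_mat_orthogonal_diagonalization[OF assms] by blast
  then have "sorted_eigenvalues A = sort ds"
    using sorted_eigenvalues_diagonalization[OF assms(1)] by blast
  then show "sorted (sorted_eigenvalues A)" "length (sorted_eigenvalues A) = n"
    using \<open>length ds = n\<close> by simp_all
qed

lemma orthogonal_diagonalization_mult_vec: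
  fixes A :: "real mat"
  assumes U: "U \<in> carrier_mat n n" "U * transpose_mat U = 1\<^sub>m n" and ds: "length ds = n"
    and A_eq: "A = U * diag_of_list ds * transpose_mat U" and x: "x \<in> carrier_vec n"
  shows "A *\<^sub>v x = U *\<^sub>v (diag_of_list ds *\<^sub>v (transpose_mat U *\<^sub>v x))"
    and "transpose_mat U *\<^sub>v (A *\<^sub>v x) = diag_of_list ds *\<^sub>v (transpose_mat U *\<^sub>v x)"
    and "U *\<^sub>v (transpose_mat U *\<^sub>v x) = x"
proof -
  have Ut: "transpose_mat U \<in> carrier_mat n n" using U(1) by simp
  have D: "diag_of_list ds \<in> carrier_mat n n" using diag_of_list_carrier[of ds] ds by simp
  show A_x: "A *\<^sub>v x = U *\<^sub>v (diag_of_list ds *\<^sub>v (transpose_mat U *\<^sub>v x))"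
    unfolding A_eq using U(1) D Ut x by (simp add: assoc_mult_mat_vec[of _ n n _ n])
  have "transpose_mat U *\<^sub>v (U *\<^sub>v (diag_of_list ds *\<^sub>v (transpose_mat U *\<^sub>v x)))
      = (transpose_mat U * U) *\<^sub>v (diag_of_list ds *\<^sub>v (transpose_mat U *\<^sub>v x))"
    by (rule assoc_mult_mat_vec[symmetric]) (use U(1) Ut D x in auto)
  also have "transpose_mat U * U = 1\<^sub>m n"
    using mat_mult_left_right_inverse[OF U(1) Ut U(2)] .
  finally show "transpose_mat U *\<^sub>v (A *\<^sub>v x) = diag_of_list ds *\<^sub>v (transpose_mat U *\<^sub>v x)"
    unfolding A_x using D Ut x by simp
  have "U *\<^sub>v (transpose_mat U *\<^sub>v x) = (U * transpose_mat U) *\<^sub>v x"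
    by (rule assoc_mult_mat_vec[symmetric]) (use U(1) Ut x in auto)
  then show "U *\<^sub>v (transpose_mat U *\<^sub>v x) = x"
    using U(2) x by simp
qed

lemma quadratic_form_diagonalization:
  fixes A :: "real mat"
  assumes U: "U \<in> carrier_mat n n" "U * transpose_mat U = 1\<^sub>m n" and ds: "length ds = n"
    and A_eq: "A = U * diag_of_list ds * transpose_mat U" and x: "x \<in> carrier_vec n"
  defines "y \<equiv> transpose_mat U *\<^sub>v x"
  shows "x \<bullet> (A *\<^sub>v x) = (\<Sum>i<n. ds ! i * (y $ i)\<^sup>2)"
    and "x \<bullet> x = (\<Sum>i<n. (y $ i)\<^sup>2)"
proof -
  note diag = orthogonal_diagonalization_mult_vec[OF U ds A_eq x, folded y_def]
  have y: "y \<in> carrier_vec n" unfolding y_def using U(1) x by simp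
  have D: "diag_of_list ds *\<^sub>v y \<in> carrier_vec n"
    using diag_of_list_carrier[of ds] ds y by simp
  have "x \<bullet> (A *\<^sub>v x) = y \<bullet> (diag_of_list ds *\<^sub>v y)"
    unfolding diag(1) using transpose_vec_mult_scalar[OF U(1) D x] by (simp add: y_def)
  also have "\<dots> = (\<Sum>i<n. ds ! i * (y $ i)\<^sup>2)"
    using y ds by (simp add: diag_of_list_mult_vec scalar_prod_def power2_eq_square atLeast0LessThan
        mult.left_commute)
  finally show "x \<bullet> (A *\<^sub>v x) = (\<Sum>i<n. ds ! i * (y $ i)\<^sup>2)" .
  have "x \<bullet> x = y \<bullet> y"
    using transpose_vec_mult_scalar[OF U(1) y x] diag(3) by (simp add: y_def)
  then show "x \<bullet> x = (\<Sum>i<n. (y $ i)\<^sup>2)"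
    using y by (simp add: scalar_prod_def power2_eq_square atLeast0LessThan)
qed

lemma nth_le_sort_last:
  fixes ds :: "'a::linorder list"
  assumes "i < length ds"
  shows "ds ! i \<le> sort ds ! (length ds - 1)"
proof -
  obtain k where k: "k < length ds" "sort ds ! k = ds ! i"
    using assms by (metis in_set_conv_nth length_sort nth_mem set_sort)
  have "sort ds ! k \<le> sort ds ! (length ds - 1)"
    by (rule sorted_nth_mono) (use k in auto)
  then show ?thesis using k by simp
qed

lemma sort_second_le_nth:
  fixes ds :: "'a::linorder list"
  assumes "i < length ds" "j < length ds" "i \<noteq> j" "ds ! j < sort ds ! 1"
  shows "sort ds ! 1 \<le> ds ! i"
proof (rule ccontr)
  let ?c = "sort ds ! 1"
  assume "\<not> ?c \<le> ds ! i"
  then have "{i, j} \<subseteq> {k. k < length ds \<and> ds ! k < ?c}" using assms by auto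
  then have "2 \<le> card {k. k < length ds \<and> ds ! k < ?c}"
    using assms(3) card_mono[of "{k. k < length ds \<and> ds ! k < ?c}" "{i, j}"] by auto
  also have "card {k. k < length ds \<and> ds ! k < ?c} = length (filter (\<lambda>x. x < ?c) ds)"
    by (simp add: length_filter_conv_card)
  also have "\<dots> = length (filter (\<lambda>x. x < ?c) (sort ds))"
    by (metis mset_filter mset_sort size_mset)
  also have "\<dots> = card {k. k < length ds \<and> sort ds ! k < ?c}"
    by (simp add: length_filter_conv_card)
  also have "\<dots> \<le> card {0::nat}"
  proof (rule card_mono)
    show "{k. k < length ds \<and> sort ds ! k < ?c} \<subseteq> {0}"
    proof
      fix k assume "k \<in> {k. k < length ds \<and> sort ds ! k < ?c}"
      then show "k \<in> {0}"
        using sorted_nth_mono[OF sorted_sort, of 1 k ds] by (cases k) auto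
    qed
  qed simp
  finally show False by simp
qed

lemma weighted_sum_squares_ge_second_smallest:
  fixes ds :: "real list" and y z :: "nat \<Rightarrow> real"
  assumes ds: "length ds = n" and dz: "\<And>i. i < n \<Longrightarrow> ds ! i * z i = 0"
    and i0: "i0 < n" "z i0 \<noteq> 0" and yz: "(\<Sum>i<n. y i * z i) = 0" and pos: "sort ds ! 1 > 0"
  shows "sort ds ! 1 * (\<Sum>i<n. (y i)\<^sup>2) \<le> (\<Sum>i<n. ds ! i * (y i)\<^sup>2)"
proof -
  let ?c = "sort ds ! 1"
  have "ds ! i0 = 0" using dz[OF i0(1)] i0(2) by simp
  then have large: "?c \<le> ds ! i" if "i < n" "i \<noteq> i0" for i
    using sort_second_le_nth[of i ds i0] that i0 ds pos by auto
  have "z i = 0" if "i < n" "i \<noteq> i0" for i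
    using dz[OF that(1)] large[OF that] pos by auto
  then have "(\<Sum>i<n. y i * z i) = y i0 * z i0"
    using i0(1) by (subst sum.remove[of _ i0]) auto
  then have "y i0 = 0" using yz i0(2) by simp
  then have "?c * (y i)\<^sup>2 \<le> ds ! i * (y i)\<^sup>2" if "i < n" for i
    using large[OF that] by (cases "i = i0") (auto intro: mult_right_mono)
  then show ?thesis
    unfolding sum_distrib_left by (intro sum_mono) simp
qed

lemma quadratic_form_le_largest_eigenvalue:
  fixes A :: "real mat"
  assumes A: "A \<in> carrier_mat n n" "transpose_mat A = A" and x: "x \<in> carrier_vec n"
  shows "x \<bullet> (A *\<^sub>v x) \<le> sorted_eigenvalues A ! (n - 1) * (x \<bullet> x)"
proof -
  obtain U ds where U: "U \<in> carrier_mat n n" "U * transpose_mat U = 1\<^sub>m n" and ds: "length ds = n"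
    and A_eq: "A = U * diag_of_list ds * transpose_mat U"
    using symmetric_mat_orthogonal_diagonalization[OF A] by blast
  let ?y = "transpose_mat U *\<^sub>v x"
  have "(\<Sum>i<n. ds ! i * (?y $ i)\<^sup>2) \<le> (\<Sum>i<n. sort ds ! (n - 1) * (?y $ i)\<^sup>2)"
    using nth_le_sort_last[of _ ds] ds by (intro sum_mono mult_right_mono) auto
  then show ?thesis
    by (simp add: quadratic_form_diagonalization[OF U ds A_eq x] sum_distrib_left
        sorted_eigenvalues_diagonalization[OF A(1) U ds A_eq])
qed

lemma quadratic_form_ge_second_eigenvalue:
  fixes A :: "real mat"
  assumes A: "A \<in> carrier_mat n n" "transpose_mat A = A"
    and u: "u \<in> carrier_vec n" "u \<noteq> 0\<^sub>v n" "A *\<^sub>v u = 0\<^sub>v n"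
    and x: "x \<in> carrier_vec n" "x \<bullet> u = 0" and pos: "sorted_eigenvalues A ! 1 > 0"
  shows "sorted_eigenvalues A ! 1 * (x \<bullet> x) \<le> x \<bullet> (A *\<^sub>v x)"
proof -
  obtain U ds where U: "U \<in> carrier_mat n n" "U * transpose_mat U = 1\<^sub>m n" and ds: "length ds = n"
    and A_eq: "A = U * diag_of_list ds * transpose_mat U"
    using symmetric_mat_orthogonal_diagonalization[OF A] by blast
  define z where "z = transpose_mat U *\<^sub>v u"
  have z: "z \<in> carrier_vec n" unfolding z_def using U(1) u(1) by simp
  note diag = orthogonal_diagonalization_mult_vec[OF U ds A_eq u(1), folded z_def]
  have "transpose_mat U *\<^sub>v 0\<^sub>v n = 0\<^sub>v n"
    using U(1) by (intro eq_vecI) auto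
  then have "vec n (\<lambda>i. ds ! i * z $ i) = 0\<^sub>v n"
    using diag(2) u(3) diag_of_list_mult_vec[of z ds] z ds by simp
  then have dz: "ds ! i * z $ i = 0" if "i < n" for i
    using that by (metis index_vec index_zero_vec(1))
  obtain i0 where i0: "i0 < n" "z $ i0 \<noteq> 0"
  proof (rule ccontr)
    assume "\<not> thesis"
    then have "z = 0\<^sub>v n" using that z by (intro eq_vecI) auto
    then show False using diag(3) u(2) U(1) by (auto intro!: eq_vecI)
  qed
  have "(transpose_mat U *\<^sub>v x) \<bullet> z = 0"
    using transpose_vec_mult_scalar[OF U(1) z x(1)] diag(3) x(2) by simp
  then have "(\<Sum>i<n. (transpose_mat U *\<^sub>v x) $ i * z $ i) = 0"
    using z by (simp add: scalar_prod_def atLeast0LessThan)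
  from weighted_sum_squares_ge_second_smallest[OF ds _ i0 this] dz pos
  show ?thesis
    by (simp add: quadratic_form_diagonalization[OF U ds A_eq x(1)]
        sorted_eigenvalues_diagonalization[OF A(1) U ds A_eq])
qed

section \<open>The Laplacian\<close>

(* The sum runs over ordered pairs, so every edge is counted twice. *)
definition dirichlet_energy :: "nat \<Rightarrow> (nat \<Rightarrow> nat \<Rightarrow> bool) \<Rightarrow> (nat \<Rightarrow> real) \<Rightarrow> real" where
  "dirichlet_energy n E f = (\<Sum>u<n. \<Sum>v<n. if E u v then (f u - f v)\<^sup>2 else 0)"

lemma dirichlet_energy_shift: "dirichlet_energy n E (\<lambda>i. f i - c) = dirichlet_energy n E f"
  unfolding dirichlet_energy_def by (intro sum.cong refl) simp

lemma scalar_prod_vec: "vec n h \<bullet> vec n k = (\<Sum>i<n. h i * k i)"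
  by (simp add: scalar_prod_def atLeast0LessThan)

lemma laplacian_carrier [simp]: "laplacian n E \<in> carrier_mat n n"
  by (simp add: laplacian_def)

lemma laplacian_symmetric:
  assumes "simple_graph n E"
  shows "transpose_mat (laplacian n E) = laplacian n E"
  using assms by (intro eq_matI) (auto simp: laplacian_def simple_graph_def)

lemma laplacian_eigenvalues_sorted: "laplacian_eigenvalues n E = sorted_eigenvalues (laplacian n E)"
  by (simp add: laplacian_eigenvalues_def sorted_eigenvalues_def)

lemma laplacian_mult_vec:
  assumes sg: "simple_graph n E" and u: "u < n"
  shows "(laplacian n E *\<^sub>v vec n f) $ u = (\<Sum>v<n. if E u v then f u - f v else 0)"
proof -
  have "\<not> E u u" using sg by (auto simp: simple_graph_def)
  then have "(laplacian n E *\<^sub>v vec n f) $ u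
      = (\<Sum>v<n. (if v = u then real (degree_in n E u) * f u else 0) - (if E u v then f v else 0))"
    using u by (auto simp: laplacian_def scalar_prod_def atLeast0LessThan intro!: sum.cong)
  also have "\<dots> = real (degree_in n E u) * f u - (\<Sum>v<n. if E u v then f v else 0)"
    using u by (simp add: sum_subtractf)
  also have "real (degree_in n E u) = (\<Sum>v<n. if E u v then 1 else 0)"
    by (simp add: degree_in_def sum.If_cases lessThan_def Collect_conj_eq Int_commute)
  finally show ?thesis
    by (simp add: sum_distrib_right sum_subtractf[symmetric] if_distrib cong: if_cong)
qed

lemma laplacian_quadratic_form:
  assumes sg: "simple_graph n E"
  shows "vec n f \<bullet> (laplacian n E *\<^sub>v vec n f) = dirichlet_energy n E f / 2"
proof -
  have E_sym: "E u v = E v u" for u v using sg by (auto simp: simple_graph_def)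
  define S where "S = (\<Sum>u<n. \<Sum>v<n. if E u v then f u * (f u - f v) else 0)"
  have "vec n f \<bullet> (laplacian n E *\<^sub>v vec n f) = (\<Sum>u<n. f u * (laplacian n E *\<^sub>v vec n f) $ u)"
    unfolding scalar_prod_def by (simp add: atLeast0LessThan laplacian_def del: index_mult_mat_vec)
  also have "\<dots> = S"
    unfolding S_def by (intro sum.cong refl) (simp add: laplacian_mult_vec[OF sg] sum_distrib_left
        if_distrib cong: if_cong)
  finally have "vec n f \<bullet> (laplacian n E *\<^sub>v vec n f) = S" .
  moreover have "S = (\<Sum>u<n. \<Sum>v<n. if E u v then f v * (f v - f u) else 0)"
    unfolding S_def by (subst sum.swap) (simp add: E_sym)
  ultimately have "2 * (vec n f \<bullet> (laplacian n E *\<^sub>v vec n f))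
      = (\<Sum>u<n. \<Sum>v<n. (if E u v then f u * (f u - f v) else 0) + (if E u v then f v * (f v - f u) else 0))"
    by (simp add: S_def sum.distrib)
  also have "\<dots> = dirichlet_energy n E f"
    unfolding dirichlet_energy_def by (intro sum.cong refl) (auto simp: power2_eq_square algebra_simps)
  finally show ?thesis by simp
qed

lemma laplacian_mult_ones:
  assumes "simple_graph n E"
  shows "laplacian n E *\<^sub>v vec n (\<lambda>_. 1) = 0\<^sub>v n"
  using laplacian_mult_vec[OF assms, of _ "\<lambda>_. 1"] by (intro eq_vecI) (auto simp: laplacian_def)

lemma laplacian_second_le_largest_eigenvalue:
  assumes "simple_graph n E" "n \<ge> 2"
  shows "laplacian_eigenvalues n E ! 1 \<le> laplacian_eigenvalues n E ! (n - 1)"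
  using sorted_eigenvalues_symmetric[OF laplacian_carrier laplacian_symmetric[OF assms(1)]] assms(2)
  by (auto simp: laplacian_eigenvalues_sorted intro: sorted_nth_mono)

lemma laplacian_largest_eigenvalue_pos:
  assumes sg: "simple_graph n E" and uv: "E u v"
  shows "laplacian_eigenvalues n E ! (n - 1) > 0"
proof -
  have uv': "u < n" "v < n" "u \<noteq> v" using sg uv by (auto simp: simple_graph_def)
  define d :: "nat \<Rightarrow> real" where "d i = of_bool (i = u)" for i
  have "(if E u v then (d u - d v)\<^sup>2 else 0) \<le> (\<Sum>w<n. if E u w then (d u - d w)\<^sup>2 else 0)"
    by (rule member_le_sum) (use uv' in auto)
  then have "1 \<le> (\<Sum>w<n. if E u w then (d u - d w)\<^sup>2 else 0)"
    using uv uv' by (simp add: d_def)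
  also have "\<dots> \<le> dirichlet_energy n E d"
    unfolding dirichlet_energy_def using uv' by (intro member_le_sum sum_nonneg) auto
  finally have "vec n d \<bullet> (laplacian n E *\<^sub>v vec n d) > 0"
    by (simp add: laplacian_quadratic_form[OF sg])
  moreover have "vec n d \<bullet> vec n d = 1"
    using uv' by (simp add: scalar_prod_vec d_def)
  ultimately show ?thesis
    using quadratic_form_le_largest_eigenvalue[OF laplacian_carrier laplacian_symmetric[OF sg], of "vec n d"]
    by (simp add: laplacian_eigenvalues_sorted)
qed

lemma sum_squares_centered:
  fixes h :: "nat \<Rightarrow> real"
  assumes "n > 0"
  shows "(\<Sum>i<n. (h i - (\<Sum>j<n. h j) / n)\<^sup>2) = (\<Sum>i<n. (h i)\<^sup>2) - (\<Sum>i<n. h i)\<^sup>2 / n"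
  using assms
  by (simp add: power2_diff sum_subtractf sum.distrib sum_distrib_left sum_divide_distrib[symmetric]
      field_simps power2_eq_square)

definition separates :: "nat \<Rightarrow> (nat \<Rightarrow> nat \<Rightarrow> bool) \<Rightarrow> nat set \<Rightarrow> nat set \<Rightarrow> bool" where
  "separates n E X Y \<longleftrightarrow> X \<subseteq> {..<n} \<and> Y \<subseteq> {..<n} \<and> X \<inter> Y = {} \<and> (\<forall>u v. E u v \<longrightarrow> u \<in> X \<longrightarrow> v \<notin> Y)"

lemma separated_sets_eigenvalue_bound:
  assumes sg: "simple_graph n E" and n: "n > 0" and pos: "laplacian_eigenvalues n E ! 1 > 0"
    and sep: "separates n E A B"
  defines "a \<equiv> real (card A)" and "b \<equiv> real (card B)"
  shows "laplacian_eigenvalues n E ! 1 * (a + b - (a - b)\<^sup>2 / n)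
           \<le> laplacian_eigenvalues n E ! (n - 1) * (a + b - (a + b)\<^sup>2 / n)"
proof -
  let ?L = "laplacian n E" and ?ev = "laplacian_eigenvalues n E"
  have L: "?L \<in> carrier_mat n n" "transpose_mat ?L = ?L"
    using laplacian_symmetric[OF sg] by auto
  have A: "A \<subseteq> {..<n}" and B: "B \<subseteq> {..<n}" and disj: "A \<inter> B = {}"
    and no_edge: "\<And>u v. E u v \<Longrightarrow> u \<in> A \<Longrightarrow> v \<notin> B"
    using sep by (auto simp: separates_def)
  define f :: "nat \<Rightarrow> real" where "f i = of_bool (i \<in> A) - of_bool (i \<in> B)" for i
  define g :: "nat \<Rightarrow> real" where "g i = of_bool (i \<in> A) + of_bool (i \<in> B)" for i
  have E_sym: "E u v \<Longrightarrow> E v u" for u v using sg by (auto simp: simple_graph_def)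
  have energy: "dirichlet_energy n E f = dirichlet_energy n E g"
    unfolding dirichlet_energy_def f_def g_def
    using no_edge E_sym disj by (intro sum.cong refl) (auto simp: power2_eq_square)
  have sum_f: "(\<Sum>i<n. f i) = a - b" and sum_g: "(\<Sum>i<n. g i) = a + b"
    using A B by (simp_all add: f_def g_def sum_subtractf sum.distrib a_def b_def Int_absorb1)
  have sq: "(f i)\<^sup>2 = g i" "(g i)\<^sup>2 = g i" for i
    using disj by (auto simp: f_def g_def)
  define x where "x = vec n (\<lambda>i. f i - (a - b) / n)"
  define w where "w = vec n (\<lambda>i. g i - (a + b) / n)"
  have "x \<bullet> vec n (\<lambda>_. 1) = 0"
    using n by (simp add: x_def scalar_prod_vec sum_subtractf sum_f)
  moreover have "vec n (\<lambda>_. 1 :: real) \<noteq> 0\<^sub>v n"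
    using n by (metis index_vec index_zero_vec(1) zero_neq_one)
  ultimately have "?ev ! 1 * (x \<bullet> x) \<le> x \<bullet> (?L *\<^sub>v x)"
    using quadratic_form_ge_second_eigenvalue[OF L, of "vec n (\<lambda>_. 1)" x] pos
      laplacian_mult_ones[OF sg] by (simp add: laplacian_eigenvalues_sorted x_def)
  also have "x \<bullet> (?L *\<^sub>v x) = w \<bullet> (?L *\<^sub>v w)"
    by (simp add: x_def w_def laplacian_quadratic_form[OF sg] dirichlet_energy_shift energy)
  also have "\<dots> \<le> ?ev ! (n - 1) * (w \<bullet> w)"
    using quadratic_form_le_largest_eigenvalue[OF L, of w] by (simp add: laplacian_eigenvalues_sorted w_def)
  finally show ?thesis
    using sum_squares_centered[OF n, of f] sum_squares_centered[OF n, of g]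
    by (simp add: x_def w_def scalar_prod_vec power2_eq_square[symmetric] sum_f sum_g sq)
qed

section \<open>Trees\<close>

lemma card_image_le_factor:
  assumes "finite S" and factor: "\<And>x y. x \<in> S \<Longrightarrow> y \<in> S \<Longrightarrow> g x = g y \<Longrightarrow> f x = f y"
  shows "card (f ` S) \<le> card (g ` S)"
proof (rule surj_card_le)
  let ?h = "\<lambda>D. f (SOME x. x \<in> S \<and> g x = D)"
  show "f ` S \<subseteq> ?h ` g ` S"
  proof
    fix z assume "z \<in> f ` S"
    then obtain x where x: "x \<in> S" "z = f x" by auto
    have "(SOME x'. x' \<in> S \<and> g x' = g x) \<in> S \<and> g (SOME x'. x' \<in> S \<and> g x' = g x) = g x"
      by (rule someI[of _ x]) (use x in simp)
    then have "?h (g x) = z"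
      unfolding x(2) by (intro factor) (use x in auto)
    then show "z \<in> ?h ` g ` S" using x(1) by blast
  qed
qed (use assms in simp)

definition linked :: "('a \<times> 'a) set \<Rightarrow> 'a \<Rightarrow> 'a \<Rightarrow> bool" where
  "linked F = (symclp (\<lambda>u v. (u, v) \<in> F))\<^sup>*\<^sup>*"

definition component :: "'a set \<Rightarrow> ('a \<times> 'a) set \<Rightarrow> 'a \<Rightarrow> 'a set" where
  "component N F x = {y \<in> N. linked F x y}"

lemma linked_refl [simp]: "linked F x x"
  by (simp add: linked_def)

lemma linked_sym: "linked F x y \<Longrightarrow> linked F y x"
  unfolding linked_def by (rule sympD[OF symp_rtranclp_symclp])

lemma linked_trans: "linked F x y \<Longrightarrow> linked F y z \<Longrightarrow> linked F x z"
  unfolding linked_def by (rule rtranclp_trans)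

lemma linked_empty: "linked {} x y \<Longrightarrow> x = y"
  unfolding linked_def by (induction rule: rtranclp_induct) (auto simp: symclp_def)

lemma component_eq:
  assumes "linked F x y"
  shows "component N F x = component N F y"
proof -
  have "linked F x z \<longleftrightarrow> linked F y z" for z
    using assms linked_sym[OF assms] linked_trans by metis
  then show ?thesis by (simp add: component_def)
qed

lemma linked_insert_cases:
  assumes "linked (insert (u, v) F) x y"
  shows "linked F x y \<or> ((linked F x u \<or> linked F x v) \<and> (linked F u y \<or> linked F v y))"
  using assms unfolding linked_def
proof (induction rule: rtranclp_induct)
  case (step y z)
  then have "symclp (\<lambda>u v. (u, v) \<in> F) y z \<or> {y, z} = {u, v}"
    by (auto simp: symclp_def)
  with step.IH show ?case
    by (auto intro: rtranclp.rtrancl_into_rtrancl)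
qed simp

lemma card_le_components_plus_edges:
  assumes "finite F" "finite N"
  shows "card N \<le> card (component N F ` N) + card F"
  using assms(1)
proof (induction rule: finite_induct)
  case empty
  have "component N {} ` N = (\<lambda>x. {x}) ` N"
    by (auto simp: component_def dest: linked_empty intro!: image_cong)
  then show ?case by (simp add: card_image)
next
  case (insert e F)
  obtain u v where e: "e = (u, v)" by (cases e)
  define N1 where "N1 = {x \<in> N. component N F x = component N F u}"
  define N2 where "N2 = N - N1"
  have "component N F ` N = component N F ` N1 \<union> component N F ` N2"
    by (auto simp: N1_def N2_def)
  then have "card (component N F ` N) \<le> card (component N F ` N1) + card (component N F ` N2)"
    by (metis card_Un_le)
  moreover have "card (component N F ` N1) \<le> 1"
    using card_mono[of "{component N F u}" "component N F ` N1"] by (auto simp: N1_def)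
  moreover have "card (component N F ` N2) \<le> card (component N (insert e F) ` N2)"
  proof (rule card_image_le_factor)
    fix x y assume x: "x \<in> N2" and y: "y \<in> N2"
      and eq: "component N (insert e F) x = component N (insert e F) y"
    have "linked (insert (u, v) F) x y"
      using eq y by (auto simp: component_def e N2_def linked_def)
    moreover have "\<not> linked F x u" "\<not> linked F u y"
      using x y component_eq[of F _ _ N] by (auto simp: N1_def N2_def)
    ultimately have "linked F x y"
      using linked_insert_cases linked_trans by metis
    then show "component N F x = component N F y" by (rule component_eq)
  qed (use assms(2) in \<open>simp add: N2_def\<close>)
  moreover have "card (component N (insert e F) ` N2) \<le> card (component N (insert e F) ` N)"
    by (rule card_mono) (auto simp: N2_def assms(2))
  ultimately show ?case using insert by simp
qed

lemma connected_card_le_edges: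
  assumes "finite F" "finite N" "N \<noteq> {}" and conn: "\<And>x y. x \<in> N \<Longrightarrow> y \<in> N \<Longrightarrow> linked F x y"
  shows "card N \<le> card F + 1"
proof -
  have "component N F ` N = {N}"
    using assms(3) conn by (auto simp: component_def)
  then show ?thesis using card_le_components_plus_edges[OF assms(1,2)] by simp
qed

lemma linked_edge_set:
  assumes "simple_graph m R"
  shows "linked {(i, j). R i j \<and> i < j} = R\<^sup>*\<^sup>*"
proof -
  have "symclp (\<lambda>u v. (u, v) \<in> {(i, j). R i j \<and> i < j}) = R"
    using assms by (auto simp: symclp_def simple_graph_def fun_eq_iff dest: not_less_iff_gr_or_eq[THEN iffD1])
  then show ?thesis by (simp add: linked_def)
qed

definition remove_edge :: "(nat \<Rightarrow> nat \<Rightarrow> bool) \<Rightarrow> nat \<Rightarrow> nat \<Rightarrow> nat \<Rightarrow> nat \<Rightarrow> bool" where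
  "remove_edge T a b x y \<longleftrightarrow> T x y \<and> {x, y} \<noteq> {a, b}"

lemma tree_edge: "is_tree m T \<Longrightarrow> T a b \<Longrightarrow> a < m \<and> b < m \<and> a \<noteq> b \<and> T b a"
  unfolding is_tree_def simple_graph_def by blast

lemma tree_edge_set:
  assumes "is_tree m T"
  shows "finite {(i, j). T i j \<and> i < j}" "card {(i, j). T i j \<and> i < j} = m - 1"
proof -
  show "finite {(i, j). T i j \<and> i < j}"
    by (rule finite_subset[of _ "{..<m} \<times> {..<m}"]) (auto dest: tree_edge[OF assms])
  show "card {(i, j). T i j \<and> i < j} = m - 1"
    using assms by (simp add: is_tree_def)
qed

lemma tree_remove_edge_disconnects:
  assumes tree: "is_tree m T" and ab: "T a b"
  shows "\<not> (remove_edge T a b)\<^sup>*\<^sup>* b a"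
proof
  let ?R = "remove_edge T a b"
  assume ba: "?R\<^sup>*\<^sup>* b a"
  have sg: "simple_graph m ?R"
    using tree by (auto simp: is_tree_def simple_graph_def remove_edge_def insert_commute)
  have "symp ?R" using sg by (auto simp: symp_def simple_graph_def)
  then have ab': "?R\<^sup>*\<^sup>* a b" using ba by (metis sympD symp_rtranclp)
  have "?R\<^sup>*\<^sup>* x y" if "T\<^sup>*\<^sup>* x y" for x y
    using that
  proof (induction rule: rtranclp_induct)
    case (step y z)
    then have "?R y z \<or> {y, z} = {a, b}" by (auto simp: remove_edge_def)
    then show ?case
      using step.IH ab' ba by (auto simp: doubleton_eq_iff intro: rtranclp.rtrancl_into_rtrancl rtranclp_trans)
  qed simp
  then have "linked {(i, j). ?R i j \<and> i < j} x y" if "x < m" "y < m" for x y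
    using tree that by (simp add: linked_edge_set[OF sg] is_tree_def)
  then have "card {..<m} \<le> card {(i, j). ?R i j \<and> i < j} + 1"
    using tree_edge[OF tree ab] tree_edge_set(1)[OF tree]
    by (intro connected_card_le_edges) (auto intro: finite_subset[of _ "{(i, j). T i j \<and> i < j}"] simp: remove_edge_def)
  moreover have "{(i, j). ?R i j \<and> i < j} = {(i, j). T i j \<and> i < j} - {(min a b, max a b)}"
    using tree_edge[OF tree ab] by (auto simp: remove_edge_def doubleton_eq_iff min_def max_def)
  moreover have "(min a b, max a b) \<in> {(i, j). T i j \<and> i < j}"
    using ab tree_edge[OF tree ab] by (auto simp: min_def max_def)
  moreover have "m \<ge> 2" using tree_edge[OF tree ab] by linarith
  ultimately show False
    using tree_edge_set[OF tree] by simp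
qed

lemma tree_neighbour_choice_swap:
  assumes tree: "is_tree m T" and f: "\<And>t. t < m \<Longrightarrow> T t (f t)"
  shows "\<exists>t1<m. \<exists>t2<m. t1 \<noteq> t2 \<and> f t1 = t2 \<and> f t2 = t1"
proof (rule ccontr)
  assume no_swap: "\<not> ?thesis"
  define g where "g t = (min t (f t), max t (f t))" for t
  have "g ` {..<m} \<subseteq> {(i, j). T i j \<and> i < j}"
    using f tree_edge[OF tree] by (fastforce simp: g_def min_def max_def)
  moreover have "inj_on g {..<m}"
  proof (rule inj_onI)
    fix t1 t2 assume t12: "t1 \<in> {..<m}" "t2 \<in> {..<m}" and "g t1 = g t2"
    have doubleton_min_max: "{a, b} = {min a b, max a b}" for a b :: nat
      by (auto simp: min_def max_def)
    have "{t1, f t1} = {t2, f t2}"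
      using \<open>g t1 = g t2\<close> by (simp add: g_def doubleton_min_max[of t1] doubleton_min_max[of t2])
    then show "t1 = t2"
      using no_swap t12 by (auto simp: doubleton_eq_iff)
  qed
  ultimately have "card {..<m} \<le> card {(i, j). T i j \<and> i < j}"
    using card_inj_on_le tree_edge_set(1)[OF tree] by blast
  moreover have "m \<ge> 1" using tree by (simp add: is_tree_def)
  ultimately show False
    using tree_edge_set(2)[OF tree] by simp
qed

section \<open>Balanced separators from tree decompositions\<close>

lemma subset_sum_between:
  fixes f :: "'a \<Rightarrow> nat"
  assumes "finite I" "\<And>i. i \<in> I \<Longrightarrow> f i < c" "c \<le> sum f I" "c > 0"
  shows "\<exists>J\<subseteq>I. c \<le> sum f J \<and> sum f J < 2 * c"
  using assms
proof (induction rule: finite_induct)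
  case (insert i I)
  show ?case
  proof (cases "c \<le> sum f I")
    case True
    then obtain J where "J \<subseteq> I" "c \<le> sum f J \<and> sum f J < 2 * c" using insert by auto
    then show ?thesis by (intro exI[of _ J]) auto
  next
    case False
    have "f i < c" using insert.prems(1) by simp
    then have "sum f (insert i I) < 2 * c" using False insert(1,2) by simp
    then show ?thesis using insert.prems(2) by (intro exI[of _ "insert i I"]) auto
  qed
qed simp

definition avoiding :: "(nat \<Rightarrow> nat \<Rightarrow> bool) \<Rightarrow> nat \<Rightarrow> nat \<Rightarrow> nat \<Rightarrow> bool" where
  "avoiding T t x y \<longleftrightarrow> T x y \<and> x \<noteq> t \<and> y \<noteq> t"

lemma avoiding_rtranclp_remove_edge:
  assumes "t \<in> {a, b}" "(avoiding T t)\<^sup>*\<^sup>* x y"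
  shows "(remove_edge T a b)\<^sup>*\<^sup>* x y"
proof -
  have "avoiding T t u v \<longrightarrow> remove_edge T a b u v" for u v
    using assms(1) by (auto simp: avoiding_def remove_edge_def)
  then show ?thesis
    using mono_rtranclp[of "avoiding T t" "remove_edge T a b"] assms(2) by blast
qed

lemma avoiding_rtranclp_sym:
  "is_tree m T \<Longrightarrow> (avoiding T t)\<^sup>*\<^sup>* x y \<Longrightarrow> (avoiding T t)\<^sup>*\<^sup>* y x"
  by (rule sympD[OF symp_rtranclp]) (auto simp: symp_def avoiding_def dest: tree_edge)

lemma rtranclp_first_step_avoiding:
  assumes "T\<^sup>*\<^sup>* t s" "s \<noteq> t"
  shows "\<exists>t'. T t t' \<and> (avoiding T t)\<^sup>*\<^sup>* t' s"
  using assms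
proof (induction rule: rtranclp_induct)
  case (step y z)
  show ?case
  proof (cases "y = t")
    case False
    then obtain t' where "T t t'" "(avoiding T t)\<^sup>*\<^sup>* t' y" using step by auto
    moreover have "avoiding T t y z" using False step by (auto simp: avoiding_def)
    ultimately show ?thesis by (meson rtranclp.rtrancl_into_rtrancl)
  qed (use step in auto)
qed simp

definition branch :: "nat \<Rightarrow> nat \<Rightarrow> (nat \<Rightarrow> nat \<Rightarrow> bool) \<Rightarrow> (nat \<Rightarrow> nat set) \<Rightarrow> nat \<Rightarrow> nat \<Rightarrow> nat set" where
  "branch n m T B t t' = {v. v < n \<and> v \<notin> B t \<and> (\<exists>s<m. v \<in> B s \<and> (avoiding T t)\<^sup>*\<^sup>* t' s)}"

definition balanced_separation :: "nat \<Rightarrow> (nat \<Rightarrow> nat \<Rightarrow> bool) \<Rightarrow> nat \<Rightarrow> nat set \<Rightarrow> nat set \<Rightarrow> bool" where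
  "balanced_separation n E K X Y \<longleftrightarrow> separates n E X Y \<and> card ({..<n} - X - Y) \<le> K
     \<and> n \<le> 4 * card X + K \<and> n \<le> 4 * card Y + K"

locale tree_decomp =
  fixes n E m T B
  assumes td: "tree_decomposition n E m T B"
begin

abbreviation D where "D \<equiv> branch n m T B"

lemma tree: "is_tree m T"
  using td by (simp add: tree_decomposition_def)

lemma edge_in_bag: "E u v \<Longrightarrow> \<exists>t<m. u \<in> B t \<and> v \<in> B t"
  using td by (simp add: tree_decomposition_def)

lemma bags_avoiding_connected:
  assumes "v < n" "s1 < m" "s2 < m" "v \<in> B s1" "v \<in> B s2" "v \<notin> B t"
  shows "(avoiding T t)\<^sup>*\<^sup>* s1 s2"
proof -
  have "(\<lambda>a b. T a b \<and> a \<in> {s. s < m \<and> v \<in> B s} \<and> b \<in> {s. s < m \<and> v \<in> B s})\<^sup>*\<^sup>* s1 s2"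
    using td assms by (auto simp: tree_decomposition_def connected_in_def)
  then show ?thesis
    by (rule mono_rtranclp[rule_format, rotated]) (use assms(6) in \<open>auto simp: avoiding_def\<close>)
qed

lemma branch_edge_into_adhesion:
  assumes tt': "T t t'" and u: "u \<in> D t t'" and uv: "E u v" and v: "v < n" "v \<notin> D t t'"
  shows "v \<in> B t \<inter> B t'"
proof -
  obtain s0 where s0: "s0 < m" "u \<in> B s0" "v \<in> B s0" using edge_in_bag[OF uv] by auto
  from u obtain s1 where s1: "u < n" "u \<notin> B t" "s1 < m" "u \<in> B s1" "(avoiding T t)\<^sup>*\<^sup>* t' s1"
    by (auto simp: branch_def)
  have "(avoiding T t)\<^sup>*\<^sup>* s1 s0" by (rule bags_avoiding_connected) (use s0 s1 in auto)
  then have t's0: "(avoiding T t)\<^sup>*\<^sup>* t' s0" using s1(5) by (meson rtranclp_trans)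
  then have vt: "v \<in> B t" using v s0 by (auto simp: branch_def)
  have "v \<in> B t'"
  proof (rule ccontr)
    assume "v \<notin> B t'"
    then have "(avoiding T t')\<^sup>*\<^sup>* s0 t"
      using s0 vt v tree_edge[OF tree tt'] by (intro bags_avoiding_connected) auto
    then have "(remove_edge T t t')\<^sup>*\<^sup>* t' t"
      using t's0 by (meson avoiding_rtranclp_remove_edge insertI1 insertI2 singletonI rtranclp_trans)
    then show False using tree_remove_edge_disconnects[OF tree tt'] by simp
  qed
  then show ?thesis using vt by simp
qed

lemma branch_opposite_disjoint:
  assumes tt': "T t t'"
  shows "D t t' \<inter> D t' t = {}"
proof (rule ccontr)
  assume "D t t' \<inter> D t' t \<noteq> {}"
  then obtain v s1 s2 where s1: "v < n" "v \<notin> B t" "s1 < m" "v \<in> B s1" "(avoiding T t)\<^sup>*\<^sup>* t' s1"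
    and s2: "v \<notin> B t'" "s2 < m" "v \<in> B s2" "(avoiding T t')\<^sup>*\<^sup>* t s2"
    by (auto simp: branch_def)
  have "(avoiding T t)\<^sup>*\<^sup>* s1 s2" by (rule bags_avoiding_connected) (use s1 s2 in auto)
  moreover have "(avoiding T t')\<^sup>*\<^sup>* s2 t" using avoiding_rtranclp_sym[OF tree s2(4)] .
  ultimately have "(remove_edge T t t')\<^sup>*\<^sup>* t' t"
    using s1(5) by (meson avoiding_rtranclp_remove_edge insertI1 insertI2 singletonI rtranclp_trans)
  then show False using tree_remove_edge_disconnects[OF tree tt'] by simp
qed

lemma in_some_branch:
  assumes "t < m" "v < n" "v \<notin> B t"
  shows "\<exists>t'. T t t' \<and> v \<in> D t t'"
proof -
  obtain s where s: "s < m" "v \<in> B s" using td assms(2) by (auto simp: tree_decomposition_def)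
  have "T\<^sup>*\<^sup>* t s" using tree s assms(1) by (simp add: is_tree_def)
  moreover have "s \<noteq> t" using s assms by auto
  ultimately obtain t' where "T t t'" "(avoiding T t)\<^sup>*\<^sup>* t' s"
    using rtranclp_first_step_avoiding by blast
  then show ?thesis using s assms by (auto simp: branch_def)
qed

lemma branches_disjoint:
  assumes t1: "T t t1" and t2: "T t t2" and "t1 \<noteq> t2"
  shows "D t t1 \<inter> D t t2 = {}"
proof (rule ccontr)
  assume "D t t1 \<inter> D t t2 \<noteq> {}"
  then obtain v s1 s2 where s1: "v < n" "v \<notin> B t" "s1 < m" "v \<in> B s1" "(avoiding T t)\<^sup>*\<^sup>* t1 s1"
    and s2: "s2 < m" "v \<in> B s2" "(avoiding T t)\<^sup>*\<^sup>* t2 s2"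
    by (auto simp: branch_def)
  have "(avoiding T t)\<^sup>*\<^sup>* s1 s2" by (rule bags_avoiding_connected) (use s1 s2 in auto)
  then have "(avoiding T t)\<^sup>*\<^sup>* t2 t1"
    using s1(5) avoiding_rtranclp_sym[OF tree s2(3)] avoiding_rtranclp_sym[OF tree]
    by (meson rtranclp_trans)
  then have "(remove_edge T t t2)\<^sup>*\<^sup>* t2 t1"
    by (rule avoiding_rtranclp_remove_edge[rotated]) simp
  moreover have "remove_edge T t t2 t1 t"
    using tree_edge[OF tree t1] \<open>t1 \<noteq> t2\<close> by (auto simp: remove_edge_def doubleton_eq_iff)
  ultimately have "(remove_edge T t t2)\<^sup>*\<^sup>* t2 t" by (rule rtranclp.rtrancl_into_rtrancl)
  then show False using tree_remove_edge_disconnects[OF tree t2] by simp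
qed

lemma no_edge_between_branches:
  assumes t1: "T t t1" and t2: "T t t2" and "t1 \<noteq> t2" and u: "u \<in> D t t1" and v: "v \<in> D t t2"
  shows "\<not> E u v"
proof
  assume "E u v"
  then obtain s0 where s0: "s0 < m" "u \<in> B s0" "v \<in> B s0" using edge_in_bag by auto
  from u obtain s1 where s1: "u < n" "u \<notin> B t" "s1 < m" "u \<in> B s1" "(avoiding T t)\<^sup>*\<^sup>* t1 s1"
    by (auto simp: branch_def)
  have "(avoiding T t)\<^sup>*\<^sup>* s1 s0" by (rule bags_avoiding_connected) (use s0 s1 in auto)
  then have "v \<in> D t t1" using v s0 s1(5) by (auto simp: branch_def intro: rtranclp_trans)
  then show False using branches_disjoint[OF t1 t2 \<open>t1 \<noteq> t2\<close>] v by blast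
qed

lemma exists_node_with_small_branches:
  "\<exists>t<m. \<forall>t'. T t t' \<longrightarrow> card (D t t') \<le> card (D t' t)"
proof (rule ccontr)
  define larger where "larger a b \<longleftrightarrow> card (D a b) > card (D b a) \<or> (card (D a b) = card (D b a) \<and> a < b)"
    for a b
  assume "\<not> ?thesis"
  then have "\<forall>t<m. \<exists>t'. T t t' \<and> larger t t'" by (auto simp: larger_def not_le)
  then obtain f where f: "\<And>t. t < m \<Longrightarrow> T t (f t) \<and> larger t (f t)" by metis
  then obtain t1 t2 where "t1 < m" "t2 < m" "t1 \<noteq> t2" "f t1 = t2" "f t2 = t1"
    using tree_neighbour_choice_swap[OF tree, of f] by blast
  then have "larger t1 t2" "larger t2 t1" using f by metis+
  then show False by (auto simp: larger_def)
qed

lemma branch_subset: "D t t' \<subseteq> {..<n}"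
  by (auto simp: branch_def)

lemma bag_subset: "t < m \<Longrightarrow> B t \<subseteq> {..<n}"
  using td by (auto simp: tree_decomposition_def atLeast0LessThan)

lemma separation_from_large_branch:
  assumes Kb: "\<forall>t<m. card (B t) \<le> K" and t: "t < m" "\<forall>t'. T t t' \<longrightarrow> card (D t t') \<le> card (D t' t)"
    and tt': "T t t'" and large: "n \<le> 4 * card (D t t') + K"
  shows "\<exists>X Y. balanced_separation n E K X Y"
proof -
  define X where "X = D t t'"
  define Y where "Y = {..<n} - (B t \<inter> B t') - X"
  have "{..<n} - X - Y \<subseteq> B t" by (auto simp: Y_def)
  then have "card ({..<n} - X - Y) \<le> K"
    using card_mono finite_subset[OF bag_subset[OF t(1)]] Kb t(1) by (meson finite_lessThan le_trans)
  moreover have "separates n E X Y"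
    using branch_edge_into_adhesion[OF tt'] branch_subset by (auto simp: separates_def X_def Y_def)
  moreover have "D t' t \<subseteq> Y"
    using branch_subset[of t' t] branch_opposite_disjoint[OF tt'] by (auto simp: Y_def X_def branch_def)
  then have "card X \<le> card Y"
    using t(2) tt' card_mono[of Y "D t' t"] by (force simp: X_def Y_def)
  ultimately have "balanced_separation n E K X Y"
    using large by (auto simp: balanced_separation_def X_def)
  then show ?thesis by blast
qed

lemma finite_neighbours: "finite {t'. T t t'}"
  by (rule finite_subset[of _ "{..<m}"]) (auto dest: tree_edge[OF tree])

lemma card_UN_branches:
  assumes "J \<subseteq> {t'. T t t'}"
  shows "card (\<Union>i\<in>J. D t i) = (\<Sum>i\<in>J. card (D t i))"
proof (rule card_UN_disjoint)
  show "finite J" using finite_subset[OF assms finite_neighbours] .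
  show "\<forall>i\<in>J. finite (D t i)" using finite_subset[OF branch_subset] by blast
  show "\<forall>i\<in>J. \<forall>j\<in>J. i \<noteq> j \<longrightarrow> D t i \<inter> D t j = {}"
    using assms branches_disjoint[of t] by blast
qed

lemma UN_branches: "t < m \<Longrightarrow> (\<Union>i\<in>{t'. T t t'}. D t i) = {..<n} - B t"
  using in_some_branch branch_subset by (auto simp: branch_def)

lemma separation_from_small_branches:
  assumes Kb: "\<forall>t<m. card (B t) \<le> K" and t: "t < m" and "K < n"
    and small: "\<And>t'. T t t' \<Longrightarrow> 4 * card (D t t') < n - K"
  shows "\<exists>X Y. balanced_separation n E K X Y"
proof -
  define I where "I = {t'. T t t'}"
  have "card ({..<n} - B t) = n - card (B t)"
    using card_Diff_subset[OF finite_subset[OF bag_subset[OF t]] bag_subset[OF t]] by simp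
  then have sum_I: "n - K \<le> (\<Sum>i\<in>I. card (D t i))"
    using card_UN_branches[of I t] UN_branches[OF t] Kb t by (auto simp: I_def)
  then obtain J where J: "J \<subseteq> I" "n - K \<le> (\<Sum>i\<in>J. 4 * card (D t i))"
    "(\<Sum>i\<in>J. 4 * card (D t i)) < 2 * (n - K)"
    using subset_sum_between[OF finite_neighbours[of t], of "\<lambda>i. 4 * card (D t i)" "n - K"] small \<open>K < n\<close>
    by (auto simp: I_def simp flip: sum_distrib_left)
  define X where "X = (\<Union>i\<in>J. D t i)"
  define Y where "Y = (\<Union>i\<in>I - J. D t i)"
  have "card X = (\<Sum>i\<in>J. card (D t i))" "card Y = (\<Sum>i\<in>I - J. card (D t i))"
    using J(1) card_UN_branches by (auto simp: X_def Y_def I_def)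
  then have card_XY: "card X + card Y = (\<Sum>i\<in>I. card (D t i))" "card X = (\<Sum>i\<in>J. card (D t i))"
    using sum.subset_diff[OF J(1) finite_neighbours[of t, folded I_def], of "\<lambda>i. card (D t i)"]
    by simp_all
  have "separates n E X Y"
    unfolding separates_def
  proof (intro conjI allI impI)
    show "X \<subseteq> {..<n}" "Y \<subseteq> {..<n}" using branch_subset by (auto simp: X_def Y_def)
    show "X \<inter> Y = {}"
      using J(1) branches_disjoint[of t] by (fastforce simp: X_def Y_def I_def)
    show "v \<notin> Y" if "E u v" "u \<in> X" for u v
      using that J(1) no_edge_between_branches[of t] by (fastforce simp: X_def Y_def I_def)
  qed
  moreover have "{..<n} - X - Y \<subseteq> B t"
    using UN_branches[OF t] J(1) by (auto simp: X_def Y_def I_def)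
  then have "card ({..<n} - X - Y) \<le> K"
    using card_mono finite_subset[OF bag_subset[OF t]] Kb t by (meson finite_lessThan le_trans)
  ultimately have "balanced_separation n E K X Y"
    using J(2,3) card_XY sum_I \<open>K < n\<close>
    unfolding balanced_separation_def sum_distrib_left[symmetric] by linarith
  then show ?thesis by blast
qed

lemma balanced_separator:
  assumes "\<forall>t<m. card (B t) \<le> K"
  shows "\<exists>X Y. balanced_separation n E K X Y"
proof (cases "n \<le> K")
  case True
  then have "balanced_separation n E K {} {}" by (simp add: balanced_separation_def separates_def)
  then show ?thesis by blast
next
  case False
  obtain t where t: "t < m" "\<forall>t'. T t t' \<longrightarrow> card (D t t') \<le> card (D t' t)"
    using exists_node_with_small_branches by blast
  show ?thesis
  proof (cases "\<exists>t'. T t t' \<and> n \<le> 4 * card (D t t') + K")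
    case True
    then show ?thesis using separation_from_large_branch[OF assms t] by blast
  next
    case False
    then show ?thesis using separation_from_small_branches[OF assms t(1)] \<open>\<not> n \<le> K\<close> by force
  qed
qed

end

lemma treewidth_decomposition:
  assumes "simple_graph n E"
  shows "\<exists>m T B. tree_decomposition n E m T B \<and> (\<forall>t<m. card (B t) \<le> treewidth n E + 1)"
proof -
  have "tree_decomposition n E 1 (\<lambda>_ _. False) (\<lambda>_. {0..<n})"
    using assms by (auto simp: tree_decomposition_def is_tree_def simple_graph_def connected_in_def)
  then have "\<exists>m T B. tree_decomposition n E m T B \<and> (\<forall>t<m. card (B t) \<le> n + 1)"
    by fastforce
  then show ?thesis
    unfolding treewidth_def by (rule LeastI)
qed

lemma treewidth_balanced_separation:
  assumes "simple_graph n E"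
  shows "\<exists>X Y. balanced_separation n E (treewidth n E + 1) X Y"
proof -
  obtain m T B where "tree_decomposition n E m T B" "\<forall>t<m. card (B t) \<le> treewidth n E + 1"
    using treewidth_decomposition[OF assms] by blast
  then show ?thesis
    using tree_decomp.balanced_separator[OF tree_decomp.intro] by blast
qed

lemma cut_inequality_rearranged:
  fixes a b s n l2 ln :: real
  assumes n: "n = a + b + s" "n > 0"
    and H: "l2 * (a + b - (a - b)\<^sup>2 / n) \<le> ln * (a + b - (a + b)\<^sup>2 / n)"
  shows "4 * l2 * (a * b) \<le> (ln - l2) * s * (a + b)"
proof -
  have "n * (l2 * (a + b - (a - b)\<^sup>2 / n)) \<le> n * (ln * (a + b - (a + b)\<^sup>2 / n))"
    using H n(2) by (simp add: mult_left_mono)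
  then have H': "l2 * (n * (a + b) - (a - b)\<^sup>2) \<le> ln * (n * (a + b) - (a + b)\<^sup>2)"
    using n(2) by (simp add: algebra_simps)
  have "n * (a + b) - (a - b)\<^sup>2 = s * (a + b) + 4 * a * b"
    and "n * (a + b) - (a + b)\<^sup>2 = s * (a + b)"
    unfolding n(1) by (simp_all add: power2_eq_square algebra_simps)
  with H' have "l2 * (s * (a + b) + 4 * a * b) \<le> ln * (s * (a + b))"
    by simp
  then show ?thesis by (simp add: algebra_simps)
qed

lemma balanced_cut_bound:
  fixes a b s K n l2 ln :: real
  assumes "s \<ge> 0" and n: "n = a + b + s" "n > 0" and sK: "s \<le> K"
    and na: "n \<le> 4 * a + K" and nb: "n \<le> 4 * b + K" and l2: "l2 > 0" "l2 \<le> ln"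
    and cut: "4 * l2 * (a * b) \<le> (ln - l2) * s * (a + b)"
  shows "2 * n * l2 \<le> K * (3 * ln - l2)"
proof (cases "n \<le> K")
  case True
  have "2 * n * l2 \<le> n * (3 * ln - l2)" using l2 n(2) by (simp add: algebra_simps)
  also have "\<dots> \<le> K * (3 * ln - l2)" using True l2 by (intro mult_right_mono) auto
  finally show ?thesis .
next
  case False
  define m where "m = (n - K) / 4"
  define N where "N = a + b"
  have m: "m > 0" "a \<ge> m" "b \<ge> m" using False na nb by (auto simp: m_def)
  have N: "N \<ge> 4 * m" using n sK by (simp add: m_def N_def)
  have "3 * l2 * m * N = 4 * l2 * (m * (3 / 4 * N))" by simp
  also have "\<dots> \<le> 4 * l2 * (a * b)"
  proof -
    have "(a - m) * (b - m) \<ge> 0" using m by simp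
    then have "a * b \<ge> m * (N - m)" by (simp add: N_def algebra_simps)
    moreover have "m * (N - m) \<ge> m * (3 / 4 * N)" using N m by (intro mult_left_mono) auto
    ultimately show ?thesis using l2 by (intro mult_left_mono) auto
  qed
  also have "\<dots> \<le> (ln - l2) * K * N"
    using cut sK l2 N m \<open>s \<ge> 0\<close> by (smt (verit) N_def mult_left_mono mult_right_mono)
  finally have "3 * l2 * m \<le> (ln - l2) * K"
    using N m by (simp add: mult.assoc)
  then have "3 * l2 * n \<le> K * (4 * ln - l2)"
    unfolding m_def by (simp add: field_simps)
  moreover have "K * (2 * (4 * ln - l2)) \<le> K * (3 * (3 * ln - l2))"
    using n sK \<open>s \<ge> 0\<close> l2 by (intro mult_left_mono) auto
  ultimately show ?thesis by (simp add: algebra_simps)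
qed

lemma balanced_separation_eigenvalue_bound:
  assumes sg: "simple_graph n E" and n: "n > 0"
    and le: "laplacian_eigenvalues n E ! 1 \<le> laplacian_eigenvalues n E ! (n - 1)"
    and pos: "laplacian_eigenvalues n E ! (n - 1) > 0"
    and sep: "balanced_separation n E K X Y"
  shows "2 * real n * laplacian_eigenvalues n E ! 1
           \<le> real K * (3 * laplacian_eigenvalues n E ! (n - 1) - laplacian_eigenvalues n E ! 1)"
proof (cases "laplacian_eigenvalues n E ! 1 > 0")
  case False
  then have "2 * real n * laplacian_eigenvalues n E ! 1 \<le> 0"
    by (simp add: mult_nonneg_nonpos)
  also have "0 \<le> real K * (3 * laplacian_eigenvalues n E ! (n - 1) - laplacian_eigenvalues n E ! 1)"
    using le pos by simp
  finally show ?thesis .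
next
  case True
  have "separates n E X Y" using sep by (simp add: balanced_separation_def)
  then have X: "X \<subseteq> {..<n}" and Y: "Y \<subseteq> {..<n}" and "X \<inter> Y = {}"
    by (auto simp: separates_def)
  have "{..<n} - X - Y = {..<n} - (X \<union> Y)" by auto
  then have "card {..<n} = card X + card Y + card ({..<n} - X - Y)"
    using X Y \<open>X \<inter> Y = {}\<close> card_Un_disjoint[of X Y] card_Diff_subset[of "X \<union> Y" "{..<n}"]
      finite_subset[OF X] finite_subset[OF Y] card_mono[of "{..<n}" "X \<union> Y"]
    by (simp del: Diff_Diff_Int)
  then have "real n = real (card X) + real (card Y) + real (card ({..<n} - X - Y))"
    by simp
  with separated_sets_eigenvalue_bound[OF sg n True \<open>separates n E X Y\<close>]
  have "4 * laplacian_eigenvalues n E ! 1 * (real (card X) * real (card Y))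
      \<le> (laplacian_eigenvalues n E ! (n - 1) - laplacian_eigenvalues n E ! 1)
         * real (card ({..<n} - X - Y)) * (real (card X) + real (card Y))"
    using n by (intro cut_inequality_rearranged) auto
  then show ?thesis
    using sep True le n \<open>real n = _\<close>
    by (intro balanced_cut_bound[where s = "real (card ({..<n} - X - Y))"])
       (auto simp: balanced_separation_def)
qed

theorem theorem2:
  fixes n :: nat and E :: "nat \<Rightarrow> nat \<Rightarrow> bool"
  assumes "simple_graph n E"
    and "\<exists>u v. E u v"
  shows "real (treewidth n E) \<ge>
           2 * real n * (laplacian_eigenvalues n E ! 1)
             / (3 * (laplacian_eigenvalues n E ! (n - 1)) - laplacian_eigenvalues n E ! 1) - 1"
proof -
  let ?l2 = "laplacian_eigenvalues n E ! 1" and ?ln = "laplacian_eigenvalues n E ! (n - 1)"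
  obtain u v where uv: "E u v" using assms(2) by blast
  then have "u < n" "v < n" "u \<noteq> v" using assms(1) by (auto simp: simple_graph_def)
  then have "n \<ge> 2" by linarith
  have le: "?l2 \<le> ?ln" by (rule laplacian_second_le_largest_eigenvalue[OF assms(1) \<open>n \<ge> 2\<close>])
  have pos: "?ln > 0" by (rule laplacian_largest_eigenvalue_pos[OF assms(1) uv])
  obtain X Y where sep: "balanced_separation n E (treewidth n E + 1) X Y"
    using treewidth_balanced_separation[OF assms(1)] by blast
  have "2 * real n * ?l2 \<le> real (treewidth n E + 1) * (3 * ?ln - ?l2)"
    by (rule balanced_separation_eigenvalue_bound[OF assms(1) _ le pos sep]) (use \<open>n \<ge> 2\<close> in simp)
  moreover have "3 * ?ln - ?l2 > 0" using le pos by linarith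
  ultimately have "2 * real n * ?l2 / (3 * ?ln - ?l2) \<le> real (treewidth n E + 1)"
    by (simp add: pos_divide_le_eq)
  then show ?thesis by simp
qed

end
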